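(* Let $m\in\mathbb{N}$ and let $\frac{m+1}{m}\le\lambda<\frac{m}{m-1}$ (for $m=1$ this condition means $2\le\lambda<+\infty$). Let $f(x)=\lfloor\lambda x\rfloor$ for $x\in\mathbb{R}$, with $f^n$ its $n$-fold iterate. Then: - for each $k\in\{0,1,\dots,m-1\}$, $\lim_{n\to\infty}f^n(x)=k$ for all $x\in\left[\frac{k}{\lambda},\frac{k+1}{\lambda}\right)$; - $\lim_{n\to\infty}f^n(x)=-\infty$ for all $x\in(-\infty,0)$; - $\lim_{n\to\infty}f^n(x)=+\infty$ for all $x\in\left[\frac{m}{\lambda},+\infty\right)$.
   Context: $\lfloor x\rfloor=\max\{m\in\mathbb{Z}: m\le x\}$ denotes the floor function; $\mathbb{N}=\{1,2,\dots\}$. *)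

theory Defs
  imports "HOL-Analysis.Analysis"
begin

end

theory Submission
  imports Defs "HOL-Real_Asymp.Real_Asymp"
begin

text \<open>After one step every orbit of \<open>x \<mapsto> \<lfloor>\<lambda>x\<rfloor>\<close> consists of integers. The
  hypothesis \<open>\<lambda> < m/(m-1)\<close> makes \<open>0, \<dots>, m-1\<close> fixed points, and \<open>[k/\<lambda>, (k+1)/\<lambda>)\<close>
  is mapped onto \<open>k\<close> in one step. Since \<open>\<lambda> > 1\<close>, a negative integer \<open>j\<close> goes to
  \<open>\<lfloor>\<lambda>j\<rfloor> \<le> j - 1\<close>; since \<open>\<lambda> \<ge> (m+1)/m\<close>, an integer \<open>j \<ge> m\<close> goes to \<open>\<lfloor>\<lambda>j\<rfloor> \<ge> j + 1\<close>.
  So orbits starting below \<open>0\<close> or at or above \<open>m/\<lambda>\<close> move by at least one unit per step.\<close>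

definition floor_map :: "real \<Rightarrow> real \<Rightarrow> real" where
  "floor_map lam x = real_of_int \<lfloor>lam * x\<rfloor>"

lemma filterlim_orbit_iff_next:
  "filterlim (\<lambda>n. (g ^^ n) (g x)) F sequentially \<longleftrightarrow> filterlim (\<lambda>n. (g ^^ n) x) F sequentially"
  by (subst filterlim_sequentially_Suc[symmetric]) (simp add: funpow_Suc_right del: funpow.simps)

lemma orbit_tendsto_fixpoint:
  assumes "g c = c"
  shows "(\<lambda>n. (g ^^ n) c) \<longlonglongrightarrow> c"
proof -
  have "(g ^^ n) c = c" for n
    by (induction n) (simp_all add: assms)
  then show ?thesis by simp
qed

lemma orbit_le_minus:
  fixes g :: "real \<Rightarrow> real"
  assumes "\<And>y. y \<in> S \<Longrightarrow> g y \<in> S" and "\<And>y. y \<in> S \<Longrightarrow> g y \<le> y - 1" and "x \<in> S"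
  shows "(g ^^ n) x \<in> S \<and> (g ^^ n) x \<le> x - real n"
  using assms by (induction n) force+

lemma orbit_filterlim_at_bot:
  fixes g :: "real \<Rightarrow> real"
  assumes "\<And>y. y \<in> S \<Longrightarrow> g y \<in> S" and "\<And>y. y \<in> S \<Longrightarrow> g y \<le> y - 1" and "x \<in> S"
  shows "filterlim (\<lambda>n. (g ^^ n) x) at_bot sequentially"
proof (rule filterlim_at_bot_mono[OF _ eventuallyI])
  show "(g ^^ n) x \<le> x - real n" for n
    using orbit_le_minus[OF assms] by blast
  show "filterlim (\<lambda>n. x - real n) at_bot sequentially"
    by real_asymp
qed

lemma orbit_filterlim_at_top:
  fixes g :: "real \<Rightarrow> real"
  assumes "\<And>y. y \<in> S \<Longrightarrow> g y \<in> S" and "\<And>y. y \<in> S \<Longrightarrow> y + 1 \<le> g y" and "x \<in> S"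
  shows "filterlim (\<lambda>n. (g ^^ n) x) at_top sequentially"
proof -
  \<comment> \<open>Conjugation by negation turns the orbit into one of the decreasing case.\<close>
  have "((\<lambda>y. - y) \<circ> g \<circ> (\<lambda>y. - y)) ^^ n = (\<lambda>y. - y) \<circ> (g ^^ n) \<circ> (\<lambda>y. - y)" for n
    by (induction n) auto
  then have "(((\<lambda>y. - y) \<circ> g \<circ> (\<lambda>y. - y)) ^^ n) (- x) = - (g ^^ n) x" for n
    by simp
  moreover have "filterlim (\<lambda>n. (((\<lambda>y. - y) \<circ> g \<circ> (\<lambda>y. - y)) ^^ n) (- x)) at_bot sequentially"
    by (rule orbit_filterlim_at_bot[where S = "uminus ` S"]) (use assms in force)+
  ultimately show ?thesis
    by (simp add: filterlim_uminus_at_bot)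
qed

lemma floor_map_in_Ints: "floor_map lam x \<in> \<int>"
  by (simp add: floor_map_def)

lemma floor_map_eq_iff: "floor_map lam x = real_of_int k \<longleftrightarrow> k \<le> lam * x \<and> lam * x < k + 1"
  by (simp add: floor_map_def floor_eq_iff)

lemma floor_map_mono:
  assumes "lam \<ge> 0" "x \<le> y"
  shows "floor_map lam x \<le> floor_map lam y"
  using assms by (simp add: floor_map_def floor_mono mult_left_mono)

lemma floor_map_neg:
  assumes "lam > 0" "x < 0"
  shows "floor_map lam x < 0"
  using assms by (simp add: floor_map_def mult_pos_neg)

lemma floor_map_neg_Ints_le:
  assumes "lam > 1" "y \<in> \<int>" "y < 0"
  shows "floor_map lam y \<le> y - 1"
proof -
  have "lam * y < y"
    using assms by (simp add: mult_less_cancel_right_neg)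
  moreover obtain j where "y = real_of_int j"
    using assms(2) Ints_cases by blast
  ultimately have "\<lfloor>lam * y\<rfloor> \<le> j - 1"
    by (simp add: floor_less_iff)
  then show ?thesis
    using \<open>y = real_of_int j\<close> by (simp add: floor_map_def)
qed

lemma floor_map_large_Ints_ge:
  assumes "m \<ge> 1" "real (m + 1) / real m \<le> lam" "y \<in> \<int>" "real m \<le> y"
  shows "y + 1 \<le> floor_map lam y"
proof -
  have "y + 1 \<le> real (m + 1) / real m * y"
    using assms by (simp add: field_simps)
  also have "\<dots> \<le> lam * y"
    using assms by (intro mult_right_mono) auto
  finally have "y + 1 \<le> lam * y" .
  moreover obtain j where "y = real_of_int j"
    using assms(3) Ints_cases by blast
  ultimately have "j + 1 \<le> \<lfloor>lam * y\<rfloor>"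
    by (simp add: le_floor_iff)
  then show ?thesis
    using \<open>y = real_of_int j\<close> by (simp add: floor_map_def)
qed

lemma mult_less_Suc_of_bounded:
  fixes k m :: nat
  assumes "0 < k" "k < m" "lam < real m / (real m - 1)"
  shows "lam * real k < real k + 1"
proof -
  have "real m - 1 > 0"
    using assms by linarith
  then have "lam * (real m - 1) < real m"
    using assms by (simp add: field_simps)
  then have "lam * real k * (real m - 1) < real m * real k"
    using assms mult_strict_right_mono[of "lam * (real m - 1)" "real m" "real k"]
    by (simp add: algebra_simps)
  also have "\<dots> \<le> (real k + 1) * (real m - 1)"
    using assms by (simp add: algebra_simps)
  finally show ?thesis
    using \<open>real m - 1 > 0\<close> by (meson mult_less_cancel_right_pos)
qed

lemma floor_map_orbit_tendsto_fixpoint: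
  fixes k :: nat
  assumes "lam > 1" "lam * real k < real k + 1" "k / lam \<le> x" "x < (k + 1) / lam"
  shows "(\<lambda>n. (floor_map lam ^^ n) x) \<longlonglongrightarrow> real k"
proof -
  have "real k \<le> lam * real k"
    using assms(1) mult_right_mono[of 1 lam "real k"] by simp
  then have "floor_map lam (real k) = real k"
    using assms(2) floor_map_eq_iff[of lam "real k" "int k"] by simp
  moreover have "floor_map lam x = real k"
    using assms floor_map_eq_iff[of lam x "int k"] by (simp add: field_simps)
  ultimately show ?thesis
    using orbit_tendsto_fixpoint filterlim_orbit_iff_next by metis
qed

lemma floor_map_orbit_at_bot:
  assumes "lam > 1" "x < 0"
  shows "filterlim (\<lambda>n. (floor_map lam ^^ n) x) at_bot sequentially"
proof (rule filterlim_orbit_iff_next[THEN iffD1], rule orbit_filterlim_at_bot)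
  show "floor_map lam x \<in> {y \<in> \<int>. y < 0}"
    using assms by (simp add: floor_map_in_Ints floor_map_neg)
qed (use assms in \<open>simp_all add: floor_map_in_Ints floor_map_neg floor_map_neg_Ints_le\<close>)

lemma floor_map_orbit_at_top:
  assumes "m \<ge> 1" "real (m + 1) / real m \<le> lam" "real m / lam \<le> x"
  shows "filterlim (\<lambda>n. (floor_map lam ^^ n) x) at_top sequentially"
proof (rule filterlim_orbit_iff_next[THEN iffD1], rule orbit_filterlim_at_top)
  have "real (m + 1) / real m > 0"
    using assms(1) by simp
  then have "lam > 0"
    using assms(2) by linarith
  then have "real m \<le> floor_map lam x"
    using assms(3) floor_map_mono[of lam "real m / lam" x] floor_map_eq_iff[of lam "real m / lam" "int m"]
    by simp
  then show "floor_map lam x \<in> {y \<in> \<int>. real m \<le> y}"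
    by (simp add: floor_map_in_Ints)
qed (use floor_map_large_Ints_ge[OF assms(1,2)] in \<open>force simp: floor_map_in_Ints\<close>)+

theorem theorem3:
  fixes m :: nat and lam :: real
  assumes "m \<ge> 1"
    and "real (m + 1) / real m \<le> lam"
    and "m \<ge> 2 \<Longrightarrow> lam < real m / (real m - 1)"
  defines "f \<equiv> (\<lambda>x::real. real_of_int \<lfloor>lam * x\<rfloor>)"
  shows "(\<forall>k::nat. k < m \<longrightarrow>
            (\<forall>x. k / lam \<le> x \<and> x < (k + 1) / lam \<longrightarrow>
                 (\<lambda>n. (f ^^ n) x) \<longlonglongrightarrow> real k))
       \<and> (\<forall>x::real. x < 0 \<longrightarrow> filterlim (\<lambda>n. (f ^^ n) x) at_bot sequentially)
       \<and> (\<forall>x::real. real m / lam \<le> x \<longrightarrow> filterlim (\<lambda>n. (f ^^ n) x) at_top sequentially)"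
proof -
  have f: "f = floor_map lam"
    by (simp add: f_def floor_map_def [abs_def])
  have "real (m + 1) / real m > 1"
    using assms(1) by (simp add: field_simps)
  then have lam: "lam > 1"
    using assms(2) by linarith
  have "lam * real k < real k + 1" if "k < m" for k
    using lam that assms(3) mult_less_Suc_of_bounded[of k m lam] by (cases "k = 0") auto
  then show ?thesis
    unfolding f using lam assms(1,2)
    by (blast intro: floor_map_orbit_tendsto_fixpoint floor_map_orbit_at_bot floor_map_orbit_at_top)
qed

end
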